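(* Let $m\ge 2$. For $i=1,\dots,m$ let $p_i(z)=\sum_{j\ge1}p_{i,j}z^j$ be a power series with nonnegative real coefficients, zero constant term and radius of convergence $R_i>0$. For $n\ge0$ let $$D_n=\sum_{(c_1,\dots,c_m)}\ \prod_{i=1}^m\ \prod_{\ell=1}^{k} p_{i,c_{i,\ell}},$$ where the sum ranges over all $m$-tuples $(c_1,\dots,c_m)$ such that, for some common $k\ge0$, each $c_i=(c_{i,1},\dots,c_{i,k})$ is a composition of $n$ with exactly $k$ parts (a $k$-tuple of positive integers summing to $n$; for $n=0$ only the empty composition with $k=0$ is allowed, contributing $1$). (When all $p_{i,j}\in\{0,1\}$, $D_n$ is the number of $m$-tuples of compositions of $n$, the $i$-th one having all its parts in $\mathcal P_i=\{j: p_{i,j}=1\}$, all having the same number of parts.) Let $D(z)=\sum_{n\ge0}D_nz^n$. Fix radii $r_2,\dots,r_m>0$ with $1/r_i<R_i$ for $i=2,\dots,m$. Then there is $\delta>0$ such that for all complex $z$ with $|z|<\delta$ the series $D(z)$ converges and $$D(z)=\frac{1}{(2i\pi)^{m-1}}\oint\cdots\oint \frac{1}{1-p_1(z\,t_2\cdots t_m)\,p_2(1/t_2)\cdots p_m(1/t_m)}\,\frac{dt_2}{t_2}\cdots\frac{dt_m}{t_m},$$ where each $t_j$ runs counterclockwise over the circle $|t_j|=r_j$. *)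

theory Defs
  imports "HOL-Complex_Analysis.Complex_Analysis"
begin

definition compositions :: "nat \<Rightarrow> nat \<Rightarrow> nat list set" where
  "compositions n k = {cs. length cs = k \<and> (\<forall>x\<in>set cs. 0 < x) \<and> sum_list cs = n}"

text \<open>m-tuples (c_1,...,c_m) of compositions of n all having a common number k of parts,
  encoded as lists of length m (index 0 corresponds to c_1).\<close>
definition comp_tuples :: "nat \<Rightarrow> nat \<Rightarrow> nat list list set" where
  "comp_tuples m n = {cs. length cs = m \<and> (\<exists>k. \<forall>c\<in>set cs. c \<in> compositions n k)}"

text \<open>D_n for coefficient family p (p i j = p_{i+1,j}).\<close>
definition Dcoeff :: "nat \<Rightarrow> (nat \<Rightarrow> nat \<Rightarrow> real) \<Rightarrow> nat \<Rightarrow> real" where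
  "Dcoeff m p n = (\<Sum>cs\<in>comp_tuples m n. \<Prod>i<m. \<Prod>l<length (cs ! i). p i (cs ! i ! l))"

definition pser :: "(nat \<Rightarrow> real) \<Rightarrow> complex \<Rightarrow> complex" where
  "pser a w = (\<Sum>j. complex_of_real (a j) * w ^ j)"

primrec iter_circle_integral :: "real list \<Rightarrow> (complex list \<Rightarrow> complex) \<Rightarrow> complex" where
  "iter_circle_integral [] F = F []"
| "iter_circle_integral (r # rs) F =
     contour_integral (circlepath 0 r) (\<lambda>t. iter_circle_integral rs (\<lambda>ts. F (t # ts)))"

end

theory Submission
  imports Defs
begin

text \<open>
  On the torus \<open>|t\<^sub>i| = r\<^sub>i\<close> the product
  \<open>X = p\<^sub>1(z t\<^sub>2\<cdots>t\<^sub>m) p\<^sub>2(1/t\<^sub>2)\<cdots>p\<^sub>m(1/t\<^sub>m)\<close> has modulus at most some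
  \<open>\<theta> < 1\<close> once \<open>|z|\<close> is small, so \<open>1/(1 - X) = \<Sum>\<^sub>k X\<^sup>k\<close> uniformly.
  Expanding \<open>p\<^sub>1(z t\<^sub>2\<cdots>t\<^sub>m)\<^sup>k\<close> in powers of \<open>z\<close>, the coefficient of \<open>z\<^sup>n\<close> in
  \<open>X\<^sup>k/(t\<^sub>2\<cdots>t\<^sub>m)\<close> is a product of one-variable functions \<open>t\<^sup>n p\<^sub>i(1/t)\<^sup>k / t\<close>,
  and the circle integral of each is \<open>2\<pi>i\<close> times the coefficient of \<open>x\<^sup>n\<close> in \<open>p\<^sub>i(x)\<^sup>k\<close>,
  a sum over the compositions of \<open>n\<close> into \<open>k\<close> parts. Summing over \<open>k \<le> n\<close> gives \<open>D\<^sub>n\<close>.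
  Series and integrals are interchanged by the Weierstrass M-test on the torus, and the double
  series over \<open>(k, n)\<close> converges absolutely with majorant \<open>\<theta>\<^sup>k\<close>.
\<close>

section \<open>Iterated circle integrals\<close>

definition torus :: "real list \<Rightarrow> complex list set" where
  "torus rs = {ts. length ts = length rs \<and> (\<forall>j<length rs. norm (ts ! j) = rs ! j)}"

lemma Nil_in_torus [simp]: "[] \<in> torus []"
  by (simp add: torus_def)

lemma Cons_in_torus [simp]: "t # ts \<in> torus (r # rs) \<longleftrightarrow> norm t = r \<and> ts \<in> torus rs"
  by (auto simp: torus_def All_less_Suc2)

lemma contour_integrable_circlepath_sphere:
  "r > 0 \<Longrightarrow> continuous_on (sphere 0 r) f \<Longrightarrow> f contour_integrable_on circlepath 0 r"
  by (simp add: contour_integrable_continuous_circlepath)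

text \<open>Continuity of the inner integrals is what makes each outer contour integral exist.\<close>
primrec iter_circle_integrable :: "real list \<Rightarrow> (complex list \<Rightarrow> complex) \<Rightarrow> bool" where
  "iter_circle_integrable [] F = True"
| "iter_circle_integrable (r # rs) F \<longleftrightarrow>
     continuous_on (sphere 0 r) (\<lambda>t. iter_circle_integral rs (\<lambda>ts. F (t # ts))) \<and>
     (\<forall>t\<in>sphere 0 r. iter_circle_integrable rs (\<lambda>ts. F (t # ts)))"

lemma norm_iter_circle_integral_le:
  assumes "\<forall>r\<in>set rs. r > 0" and "B \<ge> 0" and "\<And>ts. ts \<in> torus rs \<Longrightarrow> norm (F ts) \<le> B"
  shows "norm (iter_circle_integral rs F) \<le> (\<Prod>r\<leftarrow>rs. 2 * pi * r) * B"
  using assms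
proof (induction rs arbitrary: F)
  case (Cons r rs)
  let ?K = "\<Prod>r\<leftarrow>rs. 2 * pi * r"
  let ?g = "\<lambda>t. iter_circle_integral rs (\<lambda>ts. F (t # ts))"
  have K: "?K \<ge> 0" and r: "r > 0"
    using Cons.prems(1) by (auto intro!: prod_list_nonneg mult_nonneg_nonneg simp: less_imp_le)
  have "norm (?g t) \<le> ?K * B" if "norm t = r" for t
    using Cons.IH[of "\<lambda>ts. F (t # ts)"] Cons.prems that by auto
  then have "norm (contour_integral (circlepath 0 r) ?g) \<le> ?K * B * (2 * pi * r)"
    using K r Cons.prems(2)
    by (cases "?g contour_integrable_on circlepath 0 r")
       (auto intro!: has_contour_integral_bound_circlepath[OF has_contour_integral_integral]
             simp: not_integrable_contour_integral)
  then show ?case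
    by (simp add: algebra_simps)
qed simp

lemma iter_circle_integral_add:
  assumes "\<forall>r\<in>set rs. r > 0" "iter_circle_integrable rs F" "iter_circle_integrable rs G"
  shows "iter_circle_integral rs (\<lambda>ts. F ts + G ts) = iter_circle_integral rs F + iter_circle_integral rs G"
  using assms
proof (induction rs arbitrary: F G)
  case (Cons r rs)
  let ?F = "\<lambda>t. iter_circle_integral rs (\<lambda>ts. F (t # ts))"
  let ?G = "\<lambda>t. iter_circle_integral rs (\<lambda>ts. G (t # ts))"
  have r: "r > 0" using Cons.prems by simp
  have "iter_circle_integral (r # rs) (\<lambda>ts. F ts + G ts) = contour_integral (circlepath 0 r) (\<lambda>t. ?F t + ?G t)"
    using Cons r by (auto intro!: contour_integral_cong)
  also have "\<dots> = contour_integral (circlepath 0 r) ?F + contour_integral (circlepath 0 r) ?G"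
    using Cons.prems r by (intro contour_integral_add contour_integrable_circlepath_sphere) auto
  finally show ?case by simp
qed simp

lemma iter_circle_integrable_add:
  assumes "\<forall>r\<in>set rs. r > 0" "iter_circle_integrable rs F" "iter_circle_integrable rs G"
  shows "iter_circle_integrable rs (\<lambda>ts. F ts + G ts)"
  using assms
proof (induction rs arbitrary: F G)
  case (Cons r rs)
  have "continuous_on (sphere 0 r) (\<lambda>t. iter_circle_integral rs (\<lambda>ts. F (t # ts)) +
                                         iter_circle_integral rs (\<lambda>ts. G (t # ts)))"
    using Cons.prems by (intro continuous_on_add) auto
  then have "continuous_on (sphere 0 r) (\<lambda>t. iter_circle_integral rs (\<lambda>ts. F (t # ts) + G (t # ts)))"
    using Cons.prems by (auto intro: continuous_on_cong[THEN iffD1] simp: iter_circle_integral_add)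
  then show ?case
    using Cons by auto
qed simp

lemma iter_circle_integral_cmult:
  assumes "\<forall>r\<in>set rs. r > 0" "iter_circle_integrable rs F"
  shows "iter_circle_integral rs (\<lambda>ts. c * F ts) = c * iter_circle_integral rs F"
  using assms
proof (induction rs arbitrary: F)
  case (Cons r rs)
  let ?F = "\<lambda>t. iter_circle_integral rs (\<lambda>ts. F (t # ts))"
  have r: "r > 0" using Cons.prems by simp
  have "iter_circle_integral (r # rs) (\<lambda>ts. c * F ts) = contour_integral (circlepath 0 r) (\<lambda>t. c * ?F t)"
    using Cons r by (auto intro!: contour_integral_cong)
  also have "\<dots> = c * contour_integral (circlepath 0 r) ?F"
    using Cons.prems r by (intro contour_integral_lmul contour_integrable_circlepath_sphere) auto
  finally show ?case by simp
qed simp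

lemma iter_circle_integrable_cmult:
  assumes "\<forall>r\<in>set rs. r > 0" "iter_circle_integrable rs F"
  shows "iter_circle_integrable rs (\<lambda>ts. c * F ts)"
  using assms
proof (induction rs arbitrary: F)
  case (Cons r rs)
  have "continuous_on (sphere 0 r) (\<lambda>t. c * iter_circle_integral rs (\<lambda>ts. F (t # ts)))"
    using Cons.prems by (intro continuous_on_mult_left) auto
  then have "continuous_on (sphere 0 r) (\<lambda>t. iter_circle_integral rs (\<lambda>ts. c * F (t # ts)))"
    using Cons.prems by (auto intro: continuous_on_cong[THEN iffD1] simp: iter_circle_integral_cmult)
  then show ?case
    using Cons by auto
qed simp

lemma iter_circle_integral_diff:
  assumes "\<forall>r\<in>set rs. r > 0" "iter_circle_integrable rs F" "iter_circle_integrable rs G"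
  shows "iter_circle_integral rs (\<lambda>ts. F ts - G ts) = iter_circle_integral rs F - iter_circle_integral rs G"
  using iter_circle_integral_add[OF assms(1,2) iter_circle_integrable_cmult[OF assms(1,3), of "-1"]]
        iter_circle_integral_cmult[OF assms(1,3), of "-1"]
  by simp

lemma iter_circle_integral_zero: "iter_circle_integral rs (\<lambda>_. 0) = 0"
  by (induction rs) auto

lemma iter_circle_integrable_zero: "iter_circle_integrable rs (\<lambda>_. 0)"
  by (induction rs) (auto simp: iter_circle_integral_zero)

lemma
  assumes "\<forall>r\<in>set rs. r > 0" "finite A" "\<And>a. a \<in> A \<Longrightarrow> iter_circle_integrable rs (F a)"
  shows iter_circle_integrable_sum: "iter_circle_integrable rs (\<lambda>ts. \<Sum>a\<in>A. F a ts)"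
    and iter_circle_integral_sum:
      "iter_circle_integral rs (\<lambda>ts. \<Sum>a\<in>A. F a ts) = (\<Sum>a\<in>A. iter_circle_integral rs (F a))"
  using assms(2,3)
  by (induction A rule: finite_induct)
     (simp_all add: iter_circle_integral_zero iter_circle_integrable_zero
                    iter_circle_integral_add iter_circle_integrable_add assms(1))

lemma uniform_limit_iter_circle_integral:
  assumes pos: "\<forall>r\<in>set rs. r > 0"
    and F: "\<And>N t. t \<in> S \<Longrightarrow> iter_circle_integrable rs (F N t)"
    and G: "\<And>t. t \<in> S \<Longrightarrow> iter_circle_integrable rs (G t)"
    and lim: "\<And>e. e > 0 \<Longrightarrow> \<forall>\<^sub>F N in sequentially. \<forall>t\<in>S. \<forall>ts\<in>torus rs. dist (F N t ts) (G t ts) < e"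
  shows "uniform_limit S (\<lambda>N t. iter_circle_integral rs (F N t)) (\<lambda>t. iter_circle_integral rs (G t)) sequentially"
proof (rule uniform_limitI)
  fix e :: real
  assume "e > 0"
  define K where "K = (\<Prod>r\<leftarrow>rs. 2 * pi * r)"
  have "K \<ge> 0"
    using pos by (auto simp: K_def less_imp_le intro!: prod_list_nonneg mult_nonneg_nonneg)
  define \<epsilon> where "\<epsilon> = e / (K + 1)"
  have \<epsilon>: "\<epsilon> > 0" "K * \<epsilon> < e"
    using \<open>K \<ge> 0\<close> \<open>e > 0\<close> by (simp_all add: \<epsilon>_def field_simps)
  show "\<forall>\<^sub>F N in sequentially. \<forall>t\<in>S. dist (iter_circle_integral rs (F N t)) (iter_circle_integral rs (G t)) < e"
    using lim[OF \<epsilon>(1)]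
  proof eventually_elim
    case (elim N)
    show ?case
    proof
      fix t
      assume t: "t \<in> S"
      have "dist (iter_circle_integral rs (F N t)) (iter_circle_integral rs (G t)) =
            norm (iter_circle_integral rs (\<lambda>ts. F N t ts - G t ts))"
        by (simp add: dist_norm iter_circle_integral_diff[OF pos F[OF t] G[OF t]])
      also have "\<dots> \<le> K * \<epsilon>"
        unfolding K_def using elim t \<epsilon>
        by (intro norm_iter_circle_integral_le[OF pos]) (auto simp: dist_norm less_imp_le)
      finally show "dist (iter_circle_integral rs (F N t)) (iter_circle_integral rs (G t)) < e"
        using \<epsilon>(2) by simp
    qed
  qed
qed

lemma iter_circle_integral_uniform_limit:
  assumes pos: "\<forall>r\<in>set rs. r > 0" and F: "\<And>N. iter_circle_integrable rs (F N)"
    and lim: "uniform_limit (torus rs) F G sequentially"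
  shows "iter_circle_integrable rs G \<and>
         (\<lambda>N. iter_circle_integral rs (F N)) \<longlonglongrightarrow> iter_circle_integral rs G"
  using assms
proof (induction rs arbitrary: F G)
  case Nil
  then show ?case
    using tendsto_uniform_limitI[OF Nil.prems(3) Nil_in_torus] by simp
next
  case (Cons r rs)
  have r: "r > 0" and pos: "\<forall>r\<in>set rs. r > 0"
    using Cons.prems(1) by auto
  define \<phi> where "\<phi> N t = iter_circle_integral rs (\<lambda>ts. F N (t # ts))" for N t
  define \<psi> where "\<psi> t = iter_circle_integral rs (\<lambda>ts. G (t # ts))" for t
  have F_t: "iter_circle_integrable rs (\<lambda>ts. F N (t # ts))" if "t \<in> sphere 0 r" for N t
    using Cons.prems(2)[of N] that by simp
  have G_t: "iter_circle_integrable rs (\<lambda>ts. G (t # ts))" if "t \<in> sphere 0 r" for t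
  proof -
    have "uniform_limit (torus rs) (\<lambda>N ts. F N (t # ts)) (\<lambda>ts. G (t # ts)) sequentially"
      using that by (intro uniform_limit_compose'[OF Cons.prems(3)]) auto
    then show ?thesis
      using Cons.IH[OF pos, of "\<lambda>N ts. F N (t # ts)"] F_t[OF that] by blast
  qed
  have lim_\<phi>: "uniform_limit (sphere 0 r) \<phi> \<psi> sequentially"
    unfolding \<phi>_def[abs_def] \<psi>_def[abs_def]
  proof (rule uniform_limit_iter_circle_integral[OF pos F_t G_t])
    fix e :: real
    assume "e > 0"
    then show "\<forall>\<^sub>F N in sequentially. \<forall>t\<in>sphere 0 r. \<forall>ts\<in>torus rs. dist (F N (t # ts)) (G (t # ts)) < e"
      by (rule uniform_limitD[OF Cons.prems(3), THEN eventually_mono]) auto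
  qed
  have cont_\<phi>: "continuous_on (sphere 0 r) (\<phi> N)" for N
    using Cons.prems(2)[of N] by (simp add: \<phi>_def)
  have "continuous_on (sphere 0 r) \<psi>"
    by (rule uniform_limit_theorem[OF _ lim_\<phi>]) (simp_all add: cont_\<phi>)
  moreover have "(\<lambda>N. contour_integral (circlepath 0 r) (\<phi> N)) \<longlonglongrightarrow> contour_integral (circlepath 0 r) \<psi>"
    by (rule contour_integral_uniform_limit_circlepath(2)[OF _ lim_\<phi> _ r])
       (simp_all add: contour_integrable_circlepath_sphere[OF r cont_\<phi>])
  ultimately show ?case
    using G_t by (simp add: \<phi>_def[abs_def] \<psi>_def[abs_def])
qed

lemma iter_circle_integral_sums:
  assumes pos: "\<forall>r\<in>set rs. r > 0" and F: "\<And>n. iter_circle_integrable rs (F n)"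
    and bound: "\<And>n ts. ts \<in> torus rs \<Longrightarrow> norm (F n ts) \<le> M n" and M: "summable M"
    and sums: "\<And>ts. ts \<in> torus rs \<Longrightarrow> (\<lambda>n. F n ts) sums G ts"
  shows "iter_circle_integrable rs G \<and>
         (\<lambda>n. iter_circle_integral rs (F n)) sums iter_circle_integral rs G"
proof -
  have "uniform_limit (torus rs) (\<lambda>N ts. \<Sum>n<N. F n ts) G sequentially"
    using Weierstrass_m_test[of "torus rs" F M] bound M sums
    by (subst uniform_limit_cong'[where g="\<lambda>N ts. \<Sum>n<N. F n ts" and i="\<lambda>ts. \<Sum>n. F n ts"])
       (auto simp: sums_iff)
  then have "iter_circle_integrable rs G \<and>
       (\<lambda>N. iter_circle_integral rs (\<lambda>ts. \<Sum>n<N. F n ts)) \<longlonglongrightarrow> iter_circle_integral rs G"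
    using F by (intro iter_circle_integral_uniform_limit[OF pos] iter_circle_integrable_sum[OF pos]) auto
  then show ?thesis
    using F by (simp add: sums_def iter_circle_integral_sum[OF pos])
qed

lemma iter_circle_integral_prod:
  assumes "\<forall>r\<in>set rs. r > 0" and "\<And>j. j < length rs \<Longrightarrow> continuous_on (sphere 0 (rs ! j)) (g j)"
  shows "iter_circle_integrable rs (\<lambda>ts. \<Prod>j<length rs. g j (ts ! j)) \<and>
         iter_circle_integral rs (\<lambda>ts. \<Prod>j<length rs. g j (ts ! j)) =
           (\<Prod>j<length rs. contour_integral (circlepath 0 (rs ! j)) (g j))"
  using assms
proof (induction rs arbitrary: g)
  case (Cons r rs)
  have r: "r > 0" and pos: "\<forall>r\<in>set rs. r > 0"
    using Cons.prems(1) by auto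
  define H where "H ts = (\<Prod>j<length rs. g (Suc j) (ts ! j))" for ts
  define P where "P = (\<Prod>j<length rs. contour_integral (circlepath 0 (rs ! j)) (g (Suc j)))"
  have H: "iter_circle_integrable rs H \<and> iter_circle_integral rs H = P"
    unfolding H_def P_def by (rule Cons.IH[OF pos]) (use Cons.prems(2) in force)
  have split: "(\<Prod>j<length (r # rs). g j ((t # ts) ! j)) = g 0 t * H ts" for t ts
    by (simp only: H_def length_Cons prod.lessThan_Suc_shift nth_Cons_0 nth_Cons_Suc)
  have g0: "continuous_on (sphere 0 r) (g 0)"
    using Cons.prems(2)[of 0] by simp
  have inner: "iter_circle_integral rs (\<lambda>ts. g 0 t * H ts) = g 0 t * P" for t
    using H iter_circle_integral_cmult[OF pos] by simp
  have inner_integrable: "iter_circle_integrable rs (\<lambda>ts. g 0 t * H ts)" for t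
    using H iter_circle_integrable_cmult[OF pos] by simp
  have "contour_integral (circlepath 0 r) (\<lambda>t. g 0 t * P) = contour_integral (circlepath 0 r) (g 0) * P"
    by (rule contour_integral_rmul[OF contour_integrable_circlepath_sphere[OF r g0]])
  also have "\<dots> = (\<Prod>j<length (r # rs). contour_integral (circlepath 0 ((r # rs) ! j)) (g j))"
    by (simp only: P_def length_Cons prod.lessThan_Suc_shift nth_Cons_0 nth_Cons_Suc)
  finally show ?case
    using g0 by (simp only: iter_circle_integrable.simps iter_circle_integral.simps split inner
                   inner_integrable) (simp add: continuous_intros)
qed simp

lemma contour_integral_circlepath_power_div:
  assumes r: "r > 0"
  shows "contour_integral (circlepath 0 r) (\<lambda>t. t ^ n / t ^ Suc l) = (if n = l then 2 * pi * \<i> else 0)"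
proof (cases "n \<le> l")
  case True
  have "contour_integral (circlepath 0 r) (\<lambda>t. t ^ n / t ^ Suc l) =
        contour_integral (circlepath 0 r) (\<lambda>t. 1 / (t - 0) ^ Suc (l - n))"
  proof (rule contour_integral_cong)
    fix t assume "t \<in> path_image (circlepath 0 r)"
    then have "t \<noteq> 0" using r by auto
    moreover have "t ^ Suc l = t ^ n * t ^ Suc (l - n)"
      using True by (simp flip: power_add)
    ultimately show "t ^ n / t ^ Suc l = 1 / (t - 0) ^ Suc (l - n)"
      by simp
  qed simp
  also have "\<dots> = 2 * pi * \<i> * (deriv ^^ (l - n)) (\<lambda>_. 1) 0 / fact (l - n)"
    by (rule Cauchy_contour_integral_circlepath) (use r in auto)
  finally show ?thesis
    using True by simp
next
  case False
  have "contour_integral (circlepath 0 r) (\<lambda>t. t ^ n / t ^ Suc l) =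
        contour_integral (circlepath 0 r) (\<lambda>t. t ^ (n - l) / (t - 0) ^ Suc 0)"
  proof (rule contour_integral_cong)
    fix t assume "t \<in> path_image (circlepath 0 r)"
    then have "t \<noteq> 0" using r by auto
    moreover have "t ^ n = t ^ Suc l * t ^ (n - Suc l)"
      using False by (metis le_add_diff_inverse not_less_eq_eq power_add)
    moreover have "t ^ (n - l) = t * t ^ (n - Suc l)"
      using False by (simp flip: power_Suc add: Suc_diff_Suc)
    ultimately show "t ^ n / t ^ Suc l = t ^ (n - l) / (t - 0) ^ Suc 0"
      by simp
  qed simp
  also have "\<dots> = 2 * pi * \<i> * (deriv ^^ 0) (\<lambda>t. t ^ (n - l)) 0 / fact 0"
    by (rule Cauchy_contour_integral_circlepath) (use r in \<open>auto intro!: holomorphic_intros continuous_intros\<close>)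
  finally show ?thesis
    using False by simp
qed

lemma
  assumes r: "r > 0" and cont: "\<And>n. continuous_on (sphere 0 r) (f n)"
    and bound: "\<And>n t. t \<in> sphere 0 r \<Longrightarrow> norm (f n t) \<le> M n" and M: "summable M"
  shows continuous_on_sphere_suminf: "continuous_on (sphere 0 r) (\<lambda>t. \<Sum>n. f n t)"
    and contour_integral_circlepath_sums:
      "(\<lambda>n. contour_integral (circlepath 0 r) (f n)) sums contour_integral (circlepath 0 r) (\<lambda>t. \<Sum>n. f n t)"
proof -
  have lim: "uniform_limit (sphere 0 r) (\<lambda>N t. \<Sum>n<N. f n t) (\<lambda>t. \<Sum>n. f n t) sequentially"
    using bound M by (rule Weierstrass_m_test)
  have cont_sum: "continuous_on (sphere 0 r) (\<lambda>t. \<Sum>n<N. f n t)" for N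
    by (intro continuous_on_sum cont)
  show "continuous_on (sphere 0 r) (\<lambda>t. \<Sum>n. f n t)"
    by (rule uniform_limit_theorem[OF _ lim]) (simp_all add: cont_sum)
  have "(\<lambda>N. contour_integral (circlepath 0 r) (\<lambda>t. \<Sum>n<N. f n t)) \<longlonglongrightarrow>
          contour_integral (circlepath 0 r) (\<lambda>t. \<Sum>n. f n t)"
    by (rule contour_integral_uniform_limit_circlepath(2)[OF _ lim _ r])
       (simp_all add: contour_integrable_circlepath_sphere[OF r cont_sum])
  then show "(\<lambda>n. contour_integral (circlepath 0 r) (f n)) sums contour_integral (circlepath 0 r) (\<lambda>t. \<Sum>n. f n t)"
    using r cont by (simp add: sums_def contour_integral_sum contour_integrable_circlepath_sphere)
qed

lemma
  fixes c :: "nat \<Rightarrow> complex"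
  assumes c: "summable (\<lambda>l. norm (c l) * (1 / r) ^ l)" and t: "t \<in> sphere 0 r"
  shows sums_series_inverse_powers:
      "(\<lambda>l. c l * (t ^ n / t ^ Suc l)) sums (t ^ n * (\<Sum>l. c l * (1 / t) ^ l) / t)"
    and norm_series_inverse_term:
      "norm (c l * (t ^ n / t ^ Suc l)) = r ^ n / r * (norm (c l) * (1 / r) ^ l)"
proof -
  have "summable (\<lambda>l. c l * (1 / t) ^ l)"
    using t c by (intro summable_norm_cancel[of "\<lambda>l. c l * (1 / t) ^ l"])
                 (simp add: norm_mult norm_power norm_divide)
  then have "(\<lambda>l. c l * (1 / t) ^ l * (t ^ n / t)) sums ((\<Sum>l. c l * (1 / t) ^ l) * (t ^ n / t))"
    by (intro sums_mult2 summable_sums)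
  then show "(\<lambda>l. c l * (t ^ n / t ^ Suc l)) sums (t ^ n * (\<Sum>l. c l * (1 / t) ^ l) / t)"
    by (simp add: power_one_over mult_ac)
  show "norm (c l * (t ^ n / t ^ Suc l)) = r ^ n / r * (norm (c l) * (1 / r) ^ l)"
    using t by (simp add: norm_mult norm_divide norm_power power_one_over)
qed

lemma
  fixes c :: "nat \<Rightarrow> complex"
  assumes r: "r > 0" and c: "summable (\<lambda>l. norm (c l) * (1 / r) ^ l)"
  shows continuous_on_sphere_series_inverse:
      "continuous_on (sphere 0 r) (\<lambda>t. t ^ n * (\<Sum>l. c l * (1 / t) ^ l) / t)"
    and contour_integral_circlepath_series_inverse:
      "contour_integral (circlepath 0 r) (\<lambda>t. t ^ n * (\<Sum>l. c l * (1 / t) ^ l) / t) = 2 * pi * \<i> * c n"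
proof -
  define f where "f l t = c l * (t ^ n / t ^ Suc l)" for l t
  have cont: "continuous_on (sphere 0 r) (f l)" for l
    using r unfolding f_def by (intro continuous_intros) auto
  have M: "summable (\<lambda>l. r ^ n / r * (norm (c l) * (1 / r) ^ l))"
    using c by (rule summable_mult)
  have bound: "norm (f l t) \<le> r ^ n / r * (norm (c l) * (1 / r) ^ l)" if "t \<in> sphere 0 r" for l t
    using norm_series_inverse_term[OF c that] by (simp add: f_def)
  have sum_f: "(\<Sum>l. f l t) = t ^ n * (\<Sum>l. c l * (1 / t) ^ l) / t" if "t \<in> sphere 0 r" for t
    using sums_series_inverse_powers[OF c that] by (simp add: f_def sums_iff)
  have "continuous_on (sphere 0 r) (\<lambda>t. \<Sum>l. f l t)"
    using continuous_on_sphere_suminf[OF r cont bound M] .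
  moreover have "continuous_on (sphere 0 r) (\<lambda>t. \<Sum>l. f l t) \<longleftrightarrow>
                 continuous_on (sphere 0 r) (\<lambda>t. t ^ n * (\<Sum>l. c l * (1 / t) ^ l) / t)"
    using sum_f by (intro continuous_on_cong) auto
  ultimately show "continuous_on (sphere 0 r) (\<lambda>t. t ^ n * (\<Sum>l. c l * (1 / t) ^ l) / t)"
    by simp
  have "(\<lambda>l. contour_integral (circlepath 0 r) (f l)) sums contour_integral (circlepath 0 r) (\<lambda>t. \<Sum>l. f l t)"
    using contour_integral_circlepath_sums[OF r cont bound M] .
  moreover have "contour_integral (circlepath 0 r) (f l) = (if l = n then 2 * pi * \<i> * c n else 0)" for l
  proof -
    have "(\<lambda>t. t ^ n / t ^ Suc l) contour_integrable_on circlepath 0 r"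
      using r by (intro contour_integrable_circlepath_sphere[OF r]) (intro continuous_intros, auto)
    then have "contour_integral (circlepath 0 r) (f l) =
               c l * contour_integral (circlepath 0 r) (\<lambda>t. t ^ n / t ^ Suc l)"
      unfolding f_def[abs_def] by (rule contour_integral_lmul)
    then show ?thesis
      using contour_integral_circlepath_power_div[OF r, of n l] by simp
  qed
  moreover have "contour_integral (circlepath 0 r) (\<lambda>t. \<Sum>l. f l t) =
                 contour_integral (circlepath 0 r) (\<lambda>t. t ^ n * (\<Sum>l. c l * (1 / t) ^ l) / t)"
    using r sum_f by (intro contour_integral_cong) auto
  ultimately show "contour_integral (circlepath 0 r) (\<lambda>t. t ^ n * (\<Sum>l. c l * (1 / t) ^ l) / t) = 2 * pi * \<i> * c n"
    using sums_single[of n "\<lambda>_. 2 * pi * \<i> * c n"] by (simp add: sums_iff)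
qed

lemma iter_circle_integral_series_inverse_prod:
  fixes c :: "nat \<Rightarrow> nat \<Rightarrow> complex" and n :: nat
  assumes pos: "\<forall>r\<in>set rs. r > 0"
    and c: "\<And>j. j < length rs \<Longrightarrow> summable (\<lambda>l. norm (c j l) * (1 / rs ! j) ^ l)"
  defines "F \<equiv> \<lambda>ts. \<Prod>j<length rs. (ts ! j) ^ n * (\<Sum>l. c j l * (1 / ts ! j) ^ l) / ts ! j"
  shows "iter_circle_integrable rs F \<and>
         iter_circle_integral rs F = (2 * pi * \<i>) ^ length rs * (\<Prod>j<length rs. c j n)"
proof -
  have r: "rs ! j > 0" if "j < length rs" for j
    using pos that by auto
  have "iter_circle_integrable rs F \<and> iter_circle_integral rs F =
      (\<Prod>j<length rs. contour_integral (circlepath 0 (rs ! j)) (\<lambda>t. t ^ n * (\<Sum>l. c j l * (1 / t) ^ l) / t))"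
    unfolding F_def by (rule iter_circle_integral_prod[OF pos continuous_on_sphere_series_inverse[OF r c]])
  moreover have "(\<Prod>j<length rs. contour_integral (circlepath 0 (rs ! j)) (\<lambda>t. t ^ n * (\<Sum>l. c j l * (1 / t) ^ l) / t))
      = (\<Prod>j<length rs. 2 * pi * \<i> * c j n)"
    using contour_integral_circlepath_series_inverse[OF r c] by (intro prod.cong) auto
  ultimately show ?thesis
    by (simp add: prod.distrib)
qed

section \<open>Powers of power series with nonnegative coefficients\<close>

lemma finite_compositions: "finite (compositions n k)"
proof (rule finite_subset)
  show "compositions n k \<subseteq> {cs. set cs \<subseteq> {0..n} \<and> length cs = k}"
    by (auto simp: compositions_def member_le_sum_list)
qed (rule finite_lists_length_eq, simp)

lemma length_le_sum_list_pos: "\<forall>x\<in>set cs. 0 < (x::nat) \<Longrightarrow> length cs \<le> sum_list cs"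
  by (induction cs) auto

lemma compositions_eq_empty: "n < k \<Longrightarrow> compositions n k = {}"
  using length_le_sum_list_pos by (fastforce simp: compositions_def)

lemma compositions_0_right: "compositions n 0 = (if n = 0 then {[]} else {})"
  by (auto simp: compositions_def)

lemma compositions_Suc_right:
  "compositions n (Suc k) = (\<Union>j\<in>{1..n}. (#) j ` compositions (n - j) k)"
  by (fastforce simp: compositions_def length_Suc_conv)

text \<open>\<open>power_coeff a k n\<close> is the coefficient of \<open>x ^ n\<close> in \<open>(\<Sum>j. a j * x ^ j) ^ k\<close>.\<close>
definition power_coeff :: "(nat \<Rightarrow> 'a::comm_semiring_1) \<Rightarrow> nat \<Rightarrow> nat \<Rightarrow> 'a" where
  "power_coeff a k n = (\<Sum>c\<in>compositions n k. \<Prod>l<length c. a (c ! l))"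

lemma power_coeff_0_left: "power_coeff a 0 n = (if n = 0 then 1 else 0)"
  by (simp add: power_coeff_def compositions_0_right)

lemma power_coeff_eq_0: "n < k \<Longrightarrow> power_coeff a k n = 0"
  by (simp add: power_coeff_def compositions_eq_empty)

lemma power_coeff_nonneg: "(\<And>j. a j \<ge> 0) \<Longrightarrow> power_coeff (a :: nat \<Rightarrow> real) k n \<ge> 0"
  unfolding power_coeff_def by (intro sum_nonneg prod_nonneg) auto

lemma power_coeff_Suc:
  assumes "a 0 = 0"
  shows "power_coeff a (Suc k) n = (\<Sum>j\<le>n. a j * power_coeff a k (n - j))"
proof -
  have "power_coeff a (Suc k) n =
        (\<Sum>j\<in>{1..n}. \<Sum>cs\<in>(#) j ` compositions (n - j) k. \<Prod>l<length cs. a (cs ! l))"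
    unfolding power_coeff_def compositions_Suc_right
    by (rule sum.UNION_disjoint) (auto simp: finite_compositions)
  also have "\<dots> = (\<Sum>j\<in>{1..n}. a j * power_coeff a k (n - j))"
    by (intro sum.cong refl)
       (simp add: sum.reindex power_coeff_def sum_distrib_left prod.lessThan_Suc_shift
             del: prod.lessThan_Suc)
  also have "\<dots> = (\<Sum>j\<le>n. a j * power_coeff a k (n - j))"
    using assms by (simp add: atMost_atLeast0 sum.atLeast_Suc_atMost Suc_le_eq)
  finally show ?thesis .
qed

definition powser_sum :: "(nat \<Rightarrow> real) \<Rightarrow> 'a::{real_normed_field,banach} \<Rightarrow> 'a" where
  "powser_sum a w = (\<Sum>j. of_real (a j) * w ^ j)"

lemma pser_eq_powser_sum: "pser = powser_sum"
  by (simp add: fun_eq_iff pser_def powser_sum_def)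

lemma summable_norm_powser_sum:
  assumes "ereal (norm w) < conv_radius a"
  shows "summable (\<lambda>j. norm (of_real (a j) * (w::'a::{real_normed_field,banach}) ^ j))"
  using abs_summable_in_conv_radius[of "norm w" a] assms
  by (simp add: norm_mult norm_power abs_mult)

lemma powser_sum_power_sums:
  fixes w :: "'a::{real_normed_field,banach}"
  assumes nonneg: "\<And>j. a j \<ge> 0" and a0: "a 0 = 0" and w: "ereal (norm w) < conv_radius a"
  shows "(\<lambda>n. of_real (power_coeff a k n) * w ^ n) sums (powser_sum a w ^ k) \<and>
         summable (\<lambda>n. norm (of_real (power_coeff a k n) * w ^ n))"
proof (induction k)
  case 0
  have "of_real (power_coeff a 0 n) * w ^ n = (if n = 0 then 1 else 0)" for n
    by (simp add: power_coeff_0_left)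
  then show ?case
    using sums_single[of 0 "\<lambda>_. 1 :: 'a"] sums_summable[OF sums_single[of 0 "\<lambda>_. 1 :: real"]]
    by (simp add: if_distrib[of norm] cong: if_cong)
next
  case (Suc k)
  define f where "f j = of_real (a j) * w ^ j" for j
  define g where "g n = of_real (power_coeff a k n) * w ^ n" for n
  have f: "summable (\<lambda>j. norm (f j))"
    unfolding f_def using w by (rule summable_norm_powser_sum)
  have g: "summable (\<lambda>j. norm (g j))"
    using Suc by (simp add: g_def)
  have fg: "f i * g (n - i) = of_real (a i * power_coeff a k (n - i)) * w ^ n" if "i \<le> n" for i n
    using that by (simp add: f_def g_def power_add[symmetric] mult_ac)
  have "(\<lambda>n. \<Sum>i\<le>n. f i * g (n - i)) sums ((\<Sum>j. f j) * (\<Sum>j. g j))"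
    by (rule Cauchy_product_sums[OF f g])
  moreover have "(\<Sum>i\<le>n. f i * g (n - i)) = of_real (power_coeff a (Suc k) n) * w ^ n" for n
    by (simp add: fg power_coeff_Suc[of a, OF a0] sum_distrib_right)
  moreover have "(\<Sum>j. f j) = powser_sum a w" "(\<Sum>j. g j) = powser_sum a w ^ k"
    using Suc by (simp_all add: f_def g_def powser_sum_def sums_iff)
  ultimately have "(\<lambda>n. of_real (power_coeff a (Suc k) n) * w ^ n) sums (powser_sum a w ^ Suc k)"
    by simp
  moreover have "summable (\<lambda>n. \<Sum>i\<le>n. norm (f i) * norm (g (n - i)))"
    using summable_Cauchy_product[of "\<lambda>i. norm (f i)" "\<lambda>i. norm (g i)"] f g by simp
  moreover have "(\<Sum>i\<le>n. norm (f i) * norm (g (n - i))) = norm (of_real (power_coeff a (Suc k) n) * w ^ n)" for n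
  proof -
    have "norm (f i) * norm (g (n - i)) = a i * power_coeff a k (n - i) * norm w ^ n" if "i \<le> n" for i
    proof -
      have "norm (f i) * norm (g (n - i)) = norm (of_real (a i * power_coeff a k (n - i)) * w ^ n)"
        by (simp only: norm_mult[symmetric] fg[OF that])
      then show ?thesis
        using nonneg[of i] power_coeff_nonneg[of a k "n - i", OF nonneg] by (simp add: norm_mult norm_power)
    qed
    then have "(\<Sum>i\<le>n. norm (f i) * norm (g (n - i))) = power_coeff a (Suc k) n * norm w ^ n"
      by (simp add: power_coeff_Suc[of a, OF a0] sum_distrib_right)
    then show ?thesis
      using power_coeff_nonneg[of a "Suc k" n, OF nonneg] by (simp add: norm_mult norm_power)
  qed
  ultimately show ?case
    by simp
qed

lemma norm_powser_sum_le:
  fixes w :: "'a::{real_normed_field,banach}"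
  assumes "\<And>j. a j \<ge> 0" and "ereal (norm w) < conv_radius a"
  shows "norm (powser_sum a w) \<le> powser_sum a (norm w)"
proof -
  have "norm (powser_sum a w) \<le> (\<Sum>j. norm (of_real (a j) * w ^ j))"
    unfolding powser_sum_def by (rule summable_norm[OF summable_norm_powser_sum[OF assms(2)]])
  also have "\<dots> = powser_sum a (norm w)"
    using assms(1) by (simp add: powser_sum_def norm_mult norm_power)
  finally show ?thesis .
qed

lemma powser_sum_nonneg:
  fixes s :: real
  assumes "\<And>j. a j \<ge> 0" and "s \<ge> 0" and "ereal s < conv_radius a"
  shows "powser_sum a s \<ge> 0"
  using assms summable_norm_powser_sum[of s a]
  by (simp add: powser_sum_def suminf_nonneg)

lemma power_coeff_le:
  fixes s :: real
  assumes "\<And>j. a j \<ge> 0" and "a 0 = 0" and "s \<ge> 0" and "ereal s < conv_radius a"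
  shows "power_coeff a k n * s ^ n \<le> powser_sum a s ^ k"
proof -
  have "(\<lambda>n. power_coeff a k n * s ^ n) sums (powser_sum a s ^ k)"
    using powser_sum_power_sums[of a s k] assms by simp
  moreover have "(\<Sum>i\<in>{n}. power_coeff a k i * s ^ i) \<le> (\<Sum>i. power_coeff a k i * s ^ i)"
    using calculation assms power_coeff_nonneg[of a] by (intro sum_le_suminf) (auto simp: sums_iff)
  ultimately show ?thesis
    by (simp add: sums_iff)
qed

lemma powser_sum_le_linear:
  fixes s s0 :: real
  assumes nonneg: "\<And>j. a j \<ge> 0" and a0: "a 0 = 0" and s: "0 \<le> s" "s \<le> s0"
    and s0: "ereal s0 < conv_radius a"
  shows "powser_sum a s \<le> s / s0 * powser_sum a s0"
proof (cases "s0 = 0")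
  case False
  then have "s0 > 0" using s by simp
  have s_radius: "ereal s < conv_radius a"
    using s s0 by (meson ereal_less_eq(3) order_le_less_trans)
  have term_le: "a j * s ^ j \<le> s / s0 * (a j * s0 ^ j)" for j
  proof (cases j)
    case (Suc i)
    have "a j * s ^ j \<le> a j * (s * s0 ^ i)"
      using nonneg[of j] s Suc by (auto intro!: mult_left_mono power_mono)
    also have "\<dots> = s / s0 * (a j * s0 ^ j)"
      using Suc \<open>s0 > 0\<close> by (simp add: field_simps)
    finally show ?thesis .
  qed (simp add: a0)
  have "powser_sum a s = (\<Sum>j. a j * s ^ j)"
    by (simp add: powser_sum_def)
  also have "\<dots> \<le> (\<Sum>j. s / s0 * (a j * s0 ^ j))"
    using summable_norm_powser_sum[of s a] summable_norm_powser_sum[of s0 a] s s_radius s0 nonneg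
    by (intro suminf_le term_le summable_mult) simp_all
  also have "\<dots> = s / s0 * powser_sum a s0"
    using summable_norm_powser_sum[of s0 a] s s0 nonneg
    by (simp add: powser_sum_def suminf_mult del: times_divide_eq_left)
  finally show ?thesis .
qed (use s a0 in \<open>simp add: powser_sum_def\<close>)

lemma powser_sum_small_near_0:
  fixes C :: real
  assumes nonneg: "\<And>j. a j \<ge> 0" and a0: "a 0 = 0" and radius: "conv_radius a > 0" and "C \<ge> 0"
  shows "\<exists>\<epsilon>>0. \<forall>s. 0 \<le> s \<and> s < \<epsilon> \<longrightarrow> ereal s < conv_radius a \<and> powser_sum a s * C < 1"
proof -
  obtain s0 where s0: "0 < s0" "ereal s0 < conv_radius a"
    using ereal_dense2[OF radius] by (metis ereal_less(2) less_ereal.simps(1))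
  define B where "B = powser_sum a s0 * C"
  have "B \<ge> 0"
    using s0 nonneg \<open>C \<ge> 0\<close> by (simp add: B_def powser_sum_nonneg)
  show ?thesis
  proof (intro exI conjI allI impI)
    show "s0 / (B + 1) > 0"
      using s0 \<open>B \<ge> 0\<close> by simp
    fix s
    assume s: "0 \<le> s \<and> s < s0 / (B + 1)"
    have "s0 / (B + 1) \<le> s0"
      using s0 \<open>B \<ge> 0\<close> by (simp add: divide_le_eq)
    then have "s \<le> s0"
      using s by linarith
    then show "ereal s < conv_radius a"
      using s0 by (meson ereal_less_eq(3) order_le_less_trans)
    have "powser_sum a s * C \<le> (s / s0 * powser_sum a s0) * C"
      using powser_sum_le_linear[OF nonneg a0 _ \<open>s \<le> s0\<close> s0(2)] s \<open>C \<ge> 0\<close>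
      by (intro mult_right_mono) auto
    also have "\<dots> = s / s0 * B"
      by (simp add: B_def)
    also have "\<dots> \<le> 1 / (B + 1) * B"
      using s s0 \<open>B \<ge> 0\<close> by (intro mult_right_mono) (simp_all add: field_simps)
    also have "\<dots> < 1"
      using \<open>B \<ge> 0\<close> by simp
    finally show "powser_sum a s * C < 1" .
  qed
qed

section \<open>Tuples of compositions\<close>

lemma sum_prod_nth_lists:
  fixes f :: "nat \<Rightarrow> 'b \<Rightarrow> 'c::comm_semiring_1"
  assumes "finite S"
  shows "(\<Sum>cs | length cs = m \<and> set cs \<subseteq> S. \<Prod>i<m. f i (cs ! i)) = (\<Prod>i<m. \<Sum>c\<in>S. f i c)"
proof (induction m arbitrary: f)
  case 0
  have "{cs. length cs = 0 \<and> set cs \<subseteq> S} = {[]}"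
    by auto
  then show ?case
    by simp
next
  case (Suc m)
  define L where "L = {cs. length cs = m \<and> set cs \<subseteq> S}"
  have lists_Suc: "{cs. length cs = Suc m \<and> set cs \<subseteq> S} = (\<lambda>(c, cs). c # cs) ` (S \<times> L)"
    by (auto simp: L_def length_Suc_conv image_iff)
  have "inj_on (\<lambda>(c, cs). c # cs) (S \<times> L)"
    by (auto simp: inj_on_def)
  then have "(\<Sum>cs | length cs = Suc m \<and> set cs \<subseteq> S. \<Prod>i<Suc m. f i (cs ! i))
      = (\<Sum>(c, cs)\<in>S \<times> L. \<Prod>i<Suc m. f i ((c # cs) ! i))"
    unfolding lists_Suc by (subst sum.reindex) (simp_all add: case_prod_beta)
  also have "\<dots> = (\<Sum>(c, cs)\<in>S \<times> L. f 0 c * (\<Prod>i<m. f (Suc i) (cs ! i)))"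
    by (simp only: prod.lessThan_Suc_shift nth_Cons_0 nth_Cons_Suc)
  also have "\<dots> = (\<Sum>c\<in>S. f 0 c) * (\<Sum>cs\<in>L. \<Prod>i<m. f (Suc i) (cs ! i))"
    by (simp add: sum.cartesian_product[symmetric] sum_product)
  also have "\<dots> = (\<Prod>i<Suc m. \<Sum>c\<in>S. f i c)"
    using Suc.IH[of "\<lambda>i. f (Suc i)"] by (simp add: L_def prod.lessThan_Suc_shift del: prod.lessThan_Suc)
  finally show ?case .
qed

text \<open>All components of a tuple in \<open>comp_tuples m n\<close> have the same number \<open>k \<le> n\<close> of parts;
  sorting the tuples by \<open>k\<close> splits \<open>D\<^sub>n\<close> into products of coefficients of powers.\<close>
lemma Dcoeff_eq_sum_power_coeff:
  assumes "m \<ge> 1"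
  shows "Dcoeff m p n = (\<Sum>k\<le>n. \<Prod>i<m. power_coeff (p i) k n)"
proof -
  define L where "L k = {cs. length cs = m \<and> set cs \<subseteq> compositions n k}" for k
  have parts_unique: "k = k'" if "cs \<in> L k" "cs \<in> L k'" for cs k k'
  proof -
    have "cs ! 0 \<in> set cs"
      using that(1) assms by (simp add: L_def)
    then have "cs ! 0 \<in> compositions n k" "cs ! 0 \<in> compositions n k'"
      using that by (auto simp: L_def)
    then show ?thesis
      by (simp add: compositions_def)
  qed
  have comp_tuples_eq: "comp_tuples m n = (\<Union>k\<le>n. L k)"
  proof (intro set_eqI iffI)
    fix cs
    assume "cs \<in> comp_tuples m n"
    then obtain k where k: "length cs = m" "set cs \<subseteq> compositions n k"
      by (auto simp: comp_tuples_def)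
    have "cs ! 0 \<in> set cs"
      using k(1) assms by simp
    then have "cs ! 0 \<in> compositions n k"
      using k(2) by auto
    then have "k \<le> n"
      using compositions_eq_empty[of n k] by (cases "n < k") auto
    then show "cs \<in> (\<Union>k\<le>n. L k)"
      using k by (auto simp: L_def)
  qed (auto simp: L_def comp_tuples_def)
  have "finite (L k)" for k
    using finite_lists_length_eq[OF finite_compositions, of n k m] by (simp add: L_def conj_commute)
  then have "Dcoeff m p n = (\<Sum>k\<le>n. \<Sum>cs\<in>L k. \<Prod>i<m. \<Prod>l<length (cs ! i). p i (cs ! i ! l))"
    unfolding Dcoeff_def comp_tuples_eq using parts_unique by (intro sum.UNION_disjoint) auto
  also have "\<dots> = (\<Sum>k\<le>n. \<Prod>i<m. power_coeff (p i) k n)"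
    using sum_prod_nth_lists[OF finite_compositions, where f="\<lambda>i c. \<Prod>l<length c. p i (c ! l)"]
    by (simp add: L_def power_coeff_def)
  finally show ?thesis .
qed

section \<open>Triangular double series\<close>

lemma infsum_eq_suminf:
  fixes f :: "nat \<Rightarrow> 'a::banach"
  assumes "summable (\<lambda>n. norm (f n))"
  shows "infsum f UNIV = suminf f"
  using norm_summable_imp_has_sum[OF assms summable_sums[OF summable_norm_cancel[OF assms]]]
  by (rule infsumI)

lemma sums_swap_triangular:
  fixes u :: "nat \<Rightarrow> nat \<Rightarrow> 'a::{banach,second_countable_topology}" and v :: "nat \<Rightarrow> nat \<Rightarrow> real"
  assumes zero: "\<And>k n. n < k \<Longrightarrow> u k n = 0"
    and bound: "\<And>k n. norm (u k n) \<le> v k n"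
    and v: "\<And>k. summable (v k)" and V: "summable (\<lambda>k. suminf (v k))"
  shows "(\<lambda>n. \<Sum>k\<le>n. u k n) sums (\<Sum>k. \<Sum>n. u k n)"
proof -
  have u: "summable (\<lambda>n. norm (u k n))" for k
    by (rule summable_comparison_test'[OF v[of k]]) (use bound in auto)
  have u_le: "norm (\<Sum>n. u k n) \<le> (\<Sum>n. norm (u k n))" "(\<Sum>n. norm (u k n)) \<le> suminf (v k)" for k
    using bound u v by (auto intro!: summable_norm suminf_le)
  have "(\<lambda>n. norm (u k n)) summable_on UNIV" for k
    using u by (intro norm_summable_imp_summable_on) simp
  moreover have "(\<lambda>k. norm (infsum (\<lambda>n. norm (u k n)) UNIV)) summable_on UNIV"
    using u u_le(2) by (intro norm_summable_imp_summable_on summable_comparison_test'[OF V])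
                       (simp add: infsum_eq_suminf suminf_nonneg)
  ultimately have "(\<lambda>x. norm ((\<lambda>(k, n). u k n) x)) summable_on UNIV \<times> UNIV"
    using Infinite_Sum.abs_summable_on_Sigma_iff[where f="\<lambda>(k, n). u k n" and A=UNIV and B="\<lambda>_. UNIV"] by simp
  then have summable: "(\<lambda>(k, n). u k n) summable_on UNIV \<times> UNIV"
    by (rule abs_summable_summable)
  have swap: "infsum (\<lambda>k. infsum (u k) UNIV) UNIV = infsum (\<lambda>n. infsum (\<lambda>k. u k n) UNIV) UNIV"
    using summable by (rule infsum_swap_banach)
  have rows: "infsum (\<lambda>k. infsum (u k) UNIV) UNIV = (\<Sum>k. \<Sum>n. u k n)"
  proof -
    have "summable (\<lambda>k. norm (\<Sum>n. u k n))"
      using u_le by (intro summable_comparison_test'[OF V]) (auto intro: order_trans)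
    then show ?thesis
      using u by (simp add: infsum_eq_suminf)
  qed
  have columns: "infsum (\<lambda>k. u k n) UNIV = (\<Sum>k\<le>n. u k n)" for n
  proof -
    have "infsum (\<lambda>k. u k n) UNIV = infsum (\<lambda>k. u k n) {..n}"
      using zero by (intro infsum_cong_neutral) auto
    then show ?thesis
      by simp
  qed
  have "(\<lambda>(n, k). u k n) summable_on UNIV \<times> UNIV"
    using summable summable_on_swap[of "\<lambda>(k, n). u k n" UNIV UNIV] by simp
  then have "(\<lambda>n. infsum (\<lambda>k. u k n) UNIV) summable_on UNIV"
    using summable_on_Sigma_banach[of "\<lambda>n k. u k n" UNIV "\<lambda>_. UNIV"] by simp
  then have "((\<lambda>n. \<Sum>k\<le>n. u k n) has_sum (\<Sum>k. \<Sum>n. u k n)) UNIV"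
    using has_sum_infsum swap rows columns by simp
  then show ?thesis
    by (rule has_sum_imp_sums)
qed

section \<open>Expansion of the integrand on the torus\<close>

lemma prod_list_pos: "(\<And>x. x \<in> set xs \<Longrightarrow> x > 0) \<Longrightarrow> prod_list (xs :: 'a::linordered_semidom list) > 0"
  by (induction xs) auto

text \<open>In the application \<open>a0 = p\<^sub>1\<close>, \<open>a i = p\<^sub>i\<^sub>+\<^sub>2\<close> and \<open>rs = [r\<^sub>2, \<dots>, r\<^sub>m]\<close>.\<close>
locale torus_setting =
  fixes a0 :: "nat \<Rightarrow> real" and a :: "nat \<Rightarrow> nat \<Rightarrow> real" and rs :: "real list"
  assumes a0_nonneg: "\<And>j. a0 j \<ge> 0" and a0_0: "a0 0 = 0" and a0_radius_pos: "conv_radius a0 > 0"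
    and a_nonneg: "\<And>i j. i < length rs \<Longrightarrow> a i j \<ge> 0"
    and a_0: "\<And>i. i < length rs \<Longrightarrow> a i 0 = 0"
    and rs_pos: "\<forall>r\<in>set rs. r > 0"
    and a_radius: "\<And>i. i < length rs \<Longrightarrow> ereal (1 / rs ! i) < conv_radius (a i)"
begin

definition M :: "nat \<Rightarrow> real" where
  "M i = powser_sum (a i) (1 / rs ! i)"

definition W :: "complex list \<Rightarrow> complex" where
  "W ts = (\<Prod>i<length rs. 1 / ts ! i)"

definition coeff :: "nat \<Rightarrow> nat \<Rightarrow> real" where
  "coeff k n = power_coeff a0 k n * (\<Prod>i<length rs. power_coeff (a i) k n)"

lemma rs_nth_pos: "i < length rs \<Longrightarrow> rs ! i > 0"
  using rs_pos by simp

lemma prod_list_rs_pos: "prod_list rs > 0"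
  using rs_pos by (intro prod_list_pos) auto

lemma M_nonneg: "i < length rs \<Longrightarrow> M i \<ge> 0"
  unfolding M_def using a_nonneg a_radius by (intro powser_sum_nonneg) (auto simp: rs_nth_pos less_imp_le)

lemma coeff_nonneg: "coeff k n \<ge> 0"
  unfolding coeff_def using a0_nonneg a_nonneg
  by (intro mult_nonneg_nonneg prod_nonneg power_coeff_nonneg) auto

lemma power_coeff_a_le:
  assumes "i < length rs"
  shows "power_coeff (a i) k n \<le> M i ^ k * rs ! i ^ n"
proof -
  have "power_coeff (a i) k n * (1 / rs ! i) ^ n \<le> M i ^ k"
    unfolding M_def using assms a_nonneg a_0 a_radius rs_nth_pos[OF assms]
    by (intro power_coeff_le) auto
  then show ?thesis
    using rs_nth_pos[OF assms] by (simp add: power_one_over field_simps)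
qed

lemma coeff_le: "coeff k n \<le> power_coeff a0 k n * (\<Prod>i<length rs. M i) ^ k * prod_list rs ^ n"
proof -
  have "(\<Prod>i<length rs. power_coeff (a i) k n) \<le> (\<Prod>i<length rs. M i ^ k * rs ! i ^ n)"
    using power_coeff_a_le power_coeff_nonneg a_nonneg by (intro prod_mono) auto
  also have "\<dots> = (\<Prod>i<length rs. M i) ^ k * prod_list rs ^ n"
    by (simp add: prod.distrib prod_power_distrib prod.list_conv_set_nth atLeast0LessThan)
  finally show ?thesis
    unfolding coeff_def mult.assoc using power_coeff_nonneg[of a0 k n, OF a0_nonneg] by (rule mult_left_mono)
qed

lemma torus_nth:
  assumes "ts \<in> torus rs" and "i < length rs"
  shows "norm (ts ! i) = rs ! i" and "ts ! i \<noteq> 0"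
  using assms rs_nth_pos[OF assms(2)] by (auto simp: torus_def)

lemma norm_prod_list_torus:
  assumes "ts \<in> torus rs"
  shows "norm (prod_list ts) = prod_list rs"
proof -
  have "length ts = length rs"
    using assms by (simp add: torus_def)
  then have "norm (prod_list ts) = (\<Prod>i<length rs. norm (ts ! i))"
    by (simp add: prod.list_conv_set_nth atLeast0LessThan prod_norm)
  also have "\<dots> = prod_list rs"
    using torus_nth(1)[OF assms] by (simp add: prod.list_conv_set_nth atLeast0LessThan)
  finally show ?thesis .
qed

lemma prod_list_torus:
  assumes "ts \<in> torus rs"
  shows "prod_list ts = (\<Prod>i<length rs. ts ! i)"
  using assms by (simp add: torus_def prod.list_conv_set_nth atLeast0LessThan)

lemma norm_W:
  assumes "ts \<in> torus rs"
  shows "norm (W ts) = 1 / prod_list rs"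
proof -
  have "norm (W ts) = (\<Prod>i<length rs. 1 / rs ! i)"
    unfolding W_def prod_norm[symmetric] using torus_nth(1)[OF assms]
    by (intro prod.cong) (simp_all add: norm_divide)
  also have "\<dots> = 1 / prod_list rs"
    by (simp add: prod_dividef prod.list_conv_set_nth atLeast0LessThan)
  finally show ?thesis .
qed

lemma norm_prod_pser_a_le:
  assumes "ts \<in> torus rs"
  shows "norm (\<Prod>i<length rs. pser (a i) (1 / ts ! i)) \<le> (\<Prod>i<length rs. M i)"
proof -
  have "norm (pser (a i) (1 / ts ! i)) \<le> M i" if "i < length rs" for i
    using norm_powser_sum_le[of "a i" "1 / ts ! i"] a_nonneg a_radius that
    by (simp add: pser_eq_powser_sum M_def norm_divide torus_nth[OF assms])
  then show ?thesis
    unfolding prod_norm[symmetric] by (intro prod_mono) auto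
qed

lemma sums_power_coeff_inverse:
  assumes "i < length rs" and "norm t = rs ! i"
  shows "(\<lambda>l. of_real (power_coeff (a i) k l) * (1 / t) ^ l) sums (pser (a i) (1 / t) ^ k)"
  using powser_sum_power_sums[of "a i" "1 / t" k] assms a_nonneg a_0 a_radius
  by (simp add: pser_eq_powser_sum norm_divide)

end

locale torus_expansion = torus_setting +
  fixes z :: complex
  assumes a0_radius: "ereal (norm z * prod_list rs) < conv_radius a0"
    and contraction: "powser_sum a0 (norm z * prod_list rs) * (\<Prod>i<length rs. M i) < 1"
begin

definition M0 :: real where
  "M0 = powser_sum a0 (norm z * prod_list rs)"

definition \<theta> :: real where
  "\<theta> = M0 * (\<Prod>i<length rs. M i)"

definition X :: "complex list \<Rightarrow> complex" where
  "X ts = pser a0 (z * prod_list ts) * (\<Prod>i<length rs. pser (a i) (1 / ts ! i))"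

lemma M0_nonneg: "M0 \<ge> 0"
  unfolding M0_def using a0_nonneg a0_radius prod_list_rs_pos by (intro powser_sum_nonneg) auto

lemma \<theta>_nonneg: "\<theta> \<ge> 0"
  unfolding \<theta>_def using M0_nonneg M_nonneg by (intro mult_nonneg_nonneg prod_nonneg) auto

lemma \<theta>_less_1: "\<theta> < 1"
  using contraction by (simp add: \<theta>_def M0_def)

lemma norm_pser_a0_le:
  assumes "ts \<in> torus rs"
  shows "norm (pser a0 (z * prod_list ts)) \<le> M0"
  using norm_powser_sum_le[of a0 "z * prod_list ts"] a0_nonneg a0_radius
  by (simp add: M0_def pser_eq_powser_sum norm_mult norm_prod_list_torus[OF assms])

lemma norm_X_le:
  assumes "ts \<in> torus rs"
  shows "norm (X ts) \<le> \<theta>"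
  unfolding X_def \<theta>_def norm_mult
  using norm_pser_a0_le[OF assms] norm_prod_pser_a_le[OF assms] M0_nonneg
  by (intro mult_mono) auto

text \<open>The \<open>n\<close>-th term of \<open>X ts ^ k * W ts\<close> as a power series in \<open>z\<close>. Each factor
  \<open>pser (a i) (1 / t) ^ k\<close> is kept as a series in \<open>1 / t\<close>, whose \<open>n\<close>-th coefficient the
  integral over \<open>t\<close> then extracts.\<close>
definition pterm :: "nat \<Rightarrow> nat \<Rightarrow> complex list \<Rightarrow> complex" where
  "pterm k n ts = of_real (power_coeff a0 k n) * z ^ n *
     (\<Prod>i<length rs. (ts ! i) ^ n * (\<Sum>l. of_real (power_coeff (a i) k l) * (1 / ts ! i) ^ l) / ts ! i)"

lemma iter_circle_integral_pterm:
  "iter_circle_integrable rs (pterm k n) \<and>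
   iter_circle_integral rs (pterm k n) = (2 * pi * \<i>) ^ length rs * (of_real (coeff k n) * z ^ n)"
proof -
  have "summable (\<lambda>l. norm (complex_of_real (power_coeff (a i) k l)) * (1 / rs ! i) ^ l)"
    if "i < length rs" for i
    using powser_sum_power_sums[of "a i" "1 / rs ! i" k] that a_nonneg a_0 a_radius rs_nth_pos[OF that]
          power_coeff_nonneg[of "a i" k, OF a_nonneg[OF that]]
    by (simp add: norm_mult norm_power abs_mult)
  from iter_circle_integral_series_inverse_prod[OF rs_pos this, of n]
  show ?thesis
    unfolding pterm_def[abs_def] coeff_def
    by (simp add: iter_circle_integral_cmult[OF rs_pos] iter_circle_integrable_cmult[OF rs_pos] ac_simps)
qed

lemma pterm_torus:
  assumes "ts \<in> torus rs"
  shows "pterm k n ts = of_real (power_coeff a0 k n) * (z * prod_list ts) ^ n *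
                        (\<Prod>i<length rs. pser (a i) (1 / ts ! i)) ^ k * W ts"
proof -
  have "pterm k n ts = of_real (power_coeff a0 k n) * z ^ n *
          (\<Prod>i<length rs. (ts ! i) ^ n * pser (a i) (1 / ts ! i) ^ k * (1 / ts ! i))"
    unfolding pterm_def using sums_power_coeff_inverse torus_nth(1)[OF assms]
    by (intro arg_cong2[where f="(*)"] prod.cong refl) (simp add: sums_iff)
  also have "(\<Prod>i<length rs. (ts ! i) ^ n * pser (a i) (1 / ts ! i) ^ k * (1 / ts ! i)) =
             prod_list ts ^ n * (\<Prod>i<length rs. pser (a i) (1 / ts ! i)) ^ k * W ts"
    by (simp only: prod.distrib prod_power_distrib W_def prod_list_torus[OF assms])
  finally show ?thesis
    by (simp add: power_mult_distrib mult_ac)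
qed

lemma norm_pterm_le:
  assumes "ts \<in> torus rs"
  shows "norm (pterm k n ts) \<le>
           power_coeff a0 k n * (norm z * prod_list rs) ^ n * ((\<Prod>i<length rs. M i) ^ k / prod_list rs)"
proof -
  have "norm (pterm k n ts) = power_coeff a0 k n * (norm z * prod_list rs) ^ n *
          (norm (\<Prod>i<length rs. pser (a i) (1 / ts ! i)) ^ k / prod_list rs)"
    using power_coeff_nonneg[of a0 k n, OF a0_nonneg]
    by (simp add: pterm_torus[OF assms] norm_mult norm_power norm_W[OF assms]
                  norm_prod_list_torus[OF assms] power_mult_distrib)
  also have "\<dots> \<le> power_coeff a0 k n * (norm z * prod_list rs) ^ n * ((\<Prod>i<length rs. M i) ^ k / prod_list rs)"
    using norm_prod_pser_a_le[OF assms] prod_list_rs_pos power_coeff_nonneg[of a0 k n, OF a0_nonneg]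
    by (intro mult_left_mono divide_right_mono power_mono) auto
  finally show ?thesis .
qed

lemma pterm_sums:
  assumes "ts \<in> torus rs"
  shows "(\<lambda>n. pterm k n ts) sums (X ts ^ k * W ts)"
proof -
  have "(\<lambda>n. of_real (power_coeff a0 k n) * (z * prod_list ts) ^ n) sums (pser a0 (z * prod_list ts) ^ k)"
    using powser_sum_power_sums[of a0 "z * prod_list ts" k] a0_nonneg a0_0 a0_radius
    by (simp add: pser_eq_powser_sum norm_mult norm_prod_list_torus[OF assms])
  from sums_mult2[OF this, of "(\<Prod>i<length rs. pser (a i) (1 / ts ! i)) ^ k * W ts"]
  show ?thesis
    by (simp add: pterm_torus[OF assms] X_def power_mult_distrib mult_ac)
qed

lemma power_term_sums:
  "iter_circle_integrable rs (\<lambda>ts. X ts ^ k * W ts) \<and>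
   (\<lambda>n. of_real (coeff k n) * z ^ n) sums (iter_circle_integral rs (\<lambda>ts. X ts ^ k * W ts) / (2 * pi * \<i>) ^ length rs)"
proof -
  have "(\<lambda>n. power_coeff a0 k n * (norm z * prod_list rs) ^ n) sums (M0 ^ k)"
    using powser_sum_power_sums[of a0 "norm z * prod_list rs" k] a0_nonneg a0_0 a0_radius prod_list_rs_pos
    by (simp add: M0_def)
  then have majorant: "summable (\<lambda>n. power_coeff a0 k n * (norm z * prod_list rs) ^ n *
                                    ((\<Prod>i<length rs. M i) ^ k / prod_list rs))"
    by (intro summable_mult2) (rule sums_summable)
  have "iter_circle_integrable rs (\<lambda>ts. X ts ^ k * W ts) \<and>
      (\<lambda>n. iter_circle_integral rs (pterm k n)) sums iter_circle_integral rs (\<lambda>ts. X ts ^ k * W ts)"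
    by (rule iter_circle_integral_sums[OF rs_pos _ norm_pterm_le majorant pterm_sums])
       (simp add: iter_circle_integral_pterm)
  then have "(\<lambda>n. (2 * pi * \<i>) ^ length rs * (of_real (coeff k n) * z ^ n))
      sums iter_circle_integral rs (\<lambda>ts. X ts ^ k * W ts)"
    and "iter_circle_integrable rs (\<lambda>ts. X ts ^ k * W ts)"
    by (simp_all add: iter_circle_integral_pterm)
  then show ?thesis
    using sums_divide[of _ _ "(2 * pi * \<i>) ^ length rs"] by fastforce
qed

lemma geometric_series_sums:
  "(\<lambda>k. iter_circle_integral rs (\<lambda>ts. X ts ^ k * W ts)) sums
     iter_circle_integral rs (\<lambda>ts. 1 / (1 - X ts) * W ts)"
proof -
  have "iter_circle_integrable rs (\<lambda>ts. 1 / (1 - X ts) * W ts) \<and>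
      (\<lambda>k. iter_circle_integral rs (\<lambda>ts. X ts ^ k * W ts)) sums
        iter_circle_integral rs (\<lambda>ts. 1 / (1 - X ts) * W ts)"
  proof (rule iter_circle_integral_sums[OF rs_pos])
    show "iter_circle_integrable rs (\<lambda>ts. X ts ^ k * W ts)" for k
      using power_term_sums by blast
    show "norm (X ts ^ k * W ts) \<le> \<theta> ^ k / prod_list rs" if "ts \<in> torus rs" for k ts
      using norm_X_le[OF that] \<theta>_nonneg prod_list_rs_pos
      by (simp add: norm_mult norm_power norm_W[OF that] divide_right_mono power_mono)
    show "summable (\<lambda>k. \<theta> ^ k / prod_list rs)"
      using \<theta>_nonneg \<theta>_less_1 by (intro summable_divide summable_geometric) simp
    show "(\<lambda>k. X ts ^ k * W ts) sums (1 / (1 - X ts) * W ts)" if "ts \<in> torus rs" for ts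
      using norm_X_le[OF that] \<theta>_less_1 by (intro sums_mult2 geometric_sums) simp
  qed
  then show ?thesis ..
qed

lemma series_sums_iter_circle_integral:
  "(\<lambda>n. of_real (\<Sum>k\<le>n. coeff k n) * z ^ n) sums
     (iter_circle_integral rs (\<lambda>ts. 1 / (1 - X ts) * W ts) / (2 * pi * \<i>) ^ length rs)"
proof -
  define u where "u k n = of_real (coeff k n) * z ^ n" for k n
  define v where "v k n = power_coeff a0 k n * (norm z * prod_list rs) ^ n * (\<Prod>i<length rs. M i) ^ k"
    for k n
  have v_sums: "v k sums (\<theta> ^ k)" for k
    using sums_mult2[OF conjunct1[OF powser_sum_power_sums[of a0 "norm z * prod_list rs" k]]]
      a0_nonneg a0_0 a0_radius prod_list_rs_pos
    by (simp add: v_def[abs_def] \<theta>_def M0_def power_mult_distrib)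
  have "(\<lambda>n. \<Sum>k\<le>n. u k n) sums (\<Sum>k. \<Sum>n. u k n)"
  proof (rule sums_swap_triangular)
    show "u k n = 0" if "n < k" for k n
      using power_coeff_eq_0[OF that, of a0] by (simp add: u_def coeff_def)
    show "norm (u k n) \<le> v k n" for k n
      using mult_right_mono[OF coeff_le norm_ge_zero[of "z ^ n"]] coeff_nonneg
      by (simp add: u_def v_def norm_mult norm_power power_mult_distrib mult_ac)
    show "summable (v k)" for k
      using v_sums by (rule sums_summable)
    show "summable (\<lambda>k. suminf (v k))"
      using v_sums \<theta>_nonneg \<theta>_less_1 by (simp add: sums_iff summable_geometric)
  qed
  moreover have "(\<Sum>n. u k n) = iter_circle_integral rs (\<lambda>ts. X ts ^ k * W ts) / (2 * pi * \<i>) ^ length rs" for k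
    using power_term_sums[of k] by (simp add: u_def sums_iff)
  moreover have "(\<Sum>k\<le>n. u k n) = of_real (\<Sum>k\<le>n. coeff k n) * z ^ n" for n
    by (simp add: u_def sum_distrib_right)
  ultimately show ?thesis
    using sums_divide[OF geometric_series_sums, of "(2 * pi * \<i>) ^ length rs"] by (simp add: sums_iff)
qed

end

context torus_setting
begin

lemma series_sums_iter_circle_integral_near_0:
  "\<exists>\<delta>>0. \<forall>z. norm z < \<delta> \<longrightarrow>
     (\<lambda>n. of_real (\<Sum>k\<le>n. coeff k n) * z ^ n) sums
       (iter_circle_integral rs
          (\<lambda>ts. 1 / (1 - pser a0 (z * prod_list ts) * (\<Prod>i<length rs. pser (a i) (1 / ts ! i))) * W ts)
        / (2 * pi * \<i>) ^ length rs)"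
proof -
  have "(\<Prod>i<length rs. M i) \<ge> 0"
    using M_nonneg by (intro prod_nonneg) auto
  then obtain \<epsilon> where "\<epsilon> > 0" and \<epsilon>: "\<And>s. 0 \<le> s \<and> s < \<epsilon> \<longrightarrow>
      ereal s < conv_radius a0 \<and> powser_sum a0 s * (\<Prod>i<length rs. M i) < 1"
    using powser_sum_small_near_0[OF a0_nonneg a0_0 a0_radius_pos] by blast
  show ?thesis
  proof (intro exI[of _ "\<epsilon> / prod_list rs"] conjI allI impI)
    show "\<epsilon> / prod_list rs > 0"
      using \<open>\<epsilon> > 0\<close> prod_list_rs_pos by simp
    fix z :: complex
    assume "norm z < \<epsilon> / prod_list rs"
    then have "norm z * prod_list rs < \<epsilon>"
      using prod_list_rs_pos by (simp add: pos_less_divide_eq)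
    then interpret torus_expansion a0 a rs z
      using \<epsilon>[of "norm z * prod_list rs"] prod_list_rs_pos by unfold_locales auto
    show "(\<lambda>n. of_real (\<Sum>k\<le>n. coeff k n) * z ^ n) sums
       (iter_circle_integral rs
          (\<lambda>ts. 1 / (1 - pser a0 (z * prod_list ts) * (\<Prod>i<length rs. pser (a i) (1 / ts ! i))) * W ts)
        / (2 * pi * \<i>) ^ length rs)"
      using series_sums_iter_circle_integral by (simp add: X_def)
  qed
qed

end

theorem proposition2:
  fixes m :: nat and p :: "nat \<Rightarrow> nat \<Rightarrow> real" and r :: "nat \<Rightarrow> real"
  assumes m2: "m \<ge> 2"
    and nonneg: "\<And>i j. i < m \<Longrightarrow> p i j \<ge> 0"
    and const0: "\<And>i. i < m \<Longrightarrow> p i 0 = 0"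
    and radius: "\<And>i. i < m \<Longrightarrow> conv_radius (p i) > 0"
    and rpos: "\<And>i. 1 \<le> i \<Longrightarrow> i < m \<Longrightarrow> r i > 0"
    and rsmall: "\<And>i. 1 \<le> i \<Longrightarrow> i < m \<Longrightarrow> ereal (1 / r i) < conv_radius (p i)"
  shows "\<exists>\<delta>>0. \<forall>z::complex. norm z < \<delta> \<longrightarrow>
     summable (\<lambda>n. complex_of_real (Dcoeff m p n) * z ^ n) \<and>
     (\<Sum>n. complex_of_real (Dcoeff m p n) * z ^ n) =
       iter_circle_integral (map r [1..<m])
         (\<lambda>ts. 1 / (1 - pser (p 0) (z * prod_list ts) *
                         (\<Prod>j<m - 1. pser (p (Suc j)) (1 / ts ! j)))
               * (\<Prod>j<m - 1. 1 / ts ! j))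
       / (2 * pi * \<i>) ^ (m - 1)"
proof -
  define rs where "rs = map r [1..<m]"
  have rs: "length rs = m - 1" "\<And>j. j < m - 1 \<Longrightarrow> rs ! j = r (Suc j)"
    by (simp_all add: rs_def)
  interpret torus_setting "p 0" "\<lambda>i. p (Suc i)" rs
    using m2 nonneg const0 radius rpos rsmall by unfold_locales (auto simp: rs rs_def)
  have "Dcoeff m p n = (\<Sum>k\<le>n. \<Prod>i<Suc (length rs). power_coeff (p i) k n)" for n
    using Dcoeff_eq_sum_power_coeff[of m p n] m2 by (simp add: rs(1))
  then have "Dcoeff m p n = (\<Sum>k\<le>n. coeff k n)" for n
    by (simp only: coeff_def prod.lessThan_Suc_shift)
  with series_sums_iter_circle_integral_near_0 show ?thesis
    unfolding rs_def[symmetric] W_def rs(1) by (simp add: sums_iff)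
qed

end
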